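(* Let $m,n,k$ be positive integers with $k\le n$, $A\in\mathbb{R}^{m\times n}$ and $y\in\mathbb{R}^m$. Let $F(x)=\frac12\|Ax-y\|_2^2$ for $x\in\mathbb{R}^n$, and let $H:\mathbb{R}^n\to\mathbb{R}^n$ be any map such that for every $\mathcal{X}\in\mathbb{R}^n$, $$H(\mathcal{X})\in\arg\min\left\{\tfrac12\|Ax-y\|_2^2 : x\in\mathbb{R}^n,\ \mathrm{supp}(x)\subseteq\mathrm{largest}_k(\mathcal{X})\right\}.$$ Then: (1) for any $\mathcal{X}^*\in\arg\min_{\mathcal{X}\in\mathbb{R}^n}F(H(\mathcal{X}))$, the vector $H(\mathcal{X}^* )$ is a solution of $\min_{x\in\mathbb{R}^n}F(x)$ subject to $\|x\|_0\le k$; (2) for any minimizer $x'$ of $\min_{x\in\mathbb{R}^n}F(x)$ subject to $\|x\|_0\le k$, we have $x'\in\arg\min_{\mathcal{X}\in\mathbb{R}^n}F(H(\mathcal{X}))$.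
   Context: $\mathrm{supp}(x)=\{i:x_i\neq0\}$ and $\|x\|_0=|\mathrm{supp}(x)|$. For $v\in\mathbb{R}^n$, $\mathrm{largest}_k(v)$ is the set of indices of the $k$ entries of $v$ with largest absolute value (ties broken by selecting the highest indices). *)

theory Defs
  imports Complex_Main
begin

(* Vectors in R^n are represented as functions nat => real vanishing outside {0..<n};
   an m x n matrix as a function nat => nat => real (only entries i<m, j<n matter). *)

definition vecs :: "nat \<Rightarrow> (nat \<Rightarrow> real) set" where
  "vecs n = {x. \<forall>i. n \<le> i \<longrightarrow> x i = 0}"

definition supp :: "(nat \<Rightarrow> real) \<Rightarrow> nat set" where
  "supp x = {i. x i \<noteq> 0}"

definition norm0 :: "(nat \<Rightarrow> real) \<Rightarrow> nat" where
  "norm0 x = card (supp x)"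

(* largest_k(v) for v in R^n: the k indices whose entries have largest absolute value,
   ties broken in favour of higher indices. *)
definition largest :: "nat \<Rightarrow> nat \<Rightarrow> (nat \<Rightarrow> real) \<Rightarrow> nat set" where
  "largest n k v = {i. i < n \<and>
      card {j. j < n \<and> (\<bar>v j\<bar> > \<bar>v i\<bar> \<or> (\<bar>v j\<bar> = \<bar>v i\<bar> \<and> j > i))} < k}"

definition F :: "nat \<Rightarrow> nat \<Rightarrow> (nat \<Rightarrow> nat \<Rightarrow> real) \<Rightarrow> (nat \<Rightarrow> real) \<Rightarrow> (nat \<Rightarrow> real) \<Rightarrow> real" where
  "F m n A y x = (1/2) * (\<Sum>i<m. ((\<Sum>j<n. A i j * x j) - y i)^2)"

end

theory Submission
  imports Defs "HOL-Library.Product_Lexorder"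
begin

text \<open>
  Every H X is k-sparse, because at most k indices can have fewer than k competitors
  beating them; conversely every k-sparse x has its support inside largest n k x, so
  F (H x) \<le> F x.
\<close>

lemma card_fewer_than_k_above_le:
  fixes key :: "'a \<Rightarrow> 'b::linorder"
  assumes "finite S" and "inj_on key S"
  shows "card {i \<in> S. card {j \<in> S. key i < key j} < k} \<le> k"
proof (rule ccontr)
  let ?L = "{i \<in> S. card {j \<in> S. key i < key j} < k}"
  assume too_many: "\<not> card ?L \<le> k"
  have fin: "finite ?L" using \<open>finite S\<close> by simp
  have "?L \<noteq> {}" using too_many by (metis card.empty zero_le)
  then have "Min (key ` ?L) \<in> key ` ?L" using fin by simp
  then obtain i where i_key: "Min (key ` ?L) = key i" and i: "i \<in> ?L" by (rule imageE)
  have i_min: "key i \<le> key j" if "j \<in> ?L" for j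
    unfolding i_key[symmetric] using fin that by (intro Min_le) auto
  have "key i < key j" if j: "j \<in> ?L - {i}" for j
  proof -
    have "i \<in> S" "j \<in> S" "j \<noteq> i" using i j by auto
    then have "key i \<noteq> key j" using \<open>inj_on key S\<close> by (auto dest: inj_onD)
    moreover have "key i \<le> key j" using i_min j by blast
    ultimately show ?thesis by simp
  qed
  then have "?L - {i} \<subseteq> {j \<in> S. key i < key j}" by blast
  then have "card (?L - {i}) \<le> card {j \<in> S. key i < key j}"
    using \<open>finite S\<close> by (intro card_mono) auto
  also have "\<dots> < k" using i by simp
  finally show False using too_many i fin by simp
qed

lemma largest_eq_lex:
  "largest n k v = {i \<in> {..<n}. card {j \<in> {..<n}. (\<bar>v i\<bar>, i) < (\<bar>v j\<bar>, j)} < k}"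
proof -
  have "{j. j < n \<and> (\<bar>v j\<bar> > \<bar>v i\<bar> \<or> (\<bar>v j\<bar> = \<bar>v i\<bar> \<and> j > i))}
      = {j \<in> {..<n}. (\<bar>v i\<bar>, i) < (\<bar>v j\<bar>, j)}" for i
    by auto
  then show ?thesis unfolding largest_def by simp
qed

lemma card_largest_le: "card (largest n k v) \<le> k"
  unfolding largest_eq_lex by (rule card_fewer_than_k_above_le) (auto intro: inj_onI)

lemma norm0_le_if_supp_subset_largest:
  assumes "supp x \<subseteq> largest n k v"
  shows "norm0 x \<le> k"
proof -
  have "finite (largest n k v)" unfolding largest_def by simp
  then have "card (supp x) \<le> card (largest n k v)" using assms by (rule card_mono)
  then show ?thesis using card_largest_le[of n k v] unfolding norm0_def by linarith
qed

lemma supp_subset_lessThan: "x \<in> vecs n \<Longrightarrow> supp x \<subseteq> {..<n}"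
  unfolding vecs_def supp_def by (auto simp: not_le[symmetric])

lemma supp_subset_largest_self:
  assumes x: "x \<in> vecs n" and sparse: "norm0 x \<le> k"
  shows "supp x \<subseteq> largest n k x"
proof
  fix i assume i: "i \<in> supp x"
  have fin: "finite (supp x)" using supp_subset_lessThan[OF x] finite_subset by blast
  let ?beats = "{j. j < n \<and> (\<bar>x j\<bar> > \<bar>x i\<bar> \<or> (\<bar>x j\<bar> = \<bar>x i\<bar> \<and> j > i))}"
  have "?beats \<subseteq> supp x - {i}"
    using i unfolding supp_def by auto
  then have "card ?beats \<le> card (supp x - {i})"
    using fin by (intro card_mono) auto
  also have "\<dots> < card (supp x)" using fin i by (rule card_Diff1_less)
  finally show "i \<in> largest n k x"
    using sparse i supp_subset_lessThan[OF x] unfolding largest_def norm0_def by auto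
qed

theorem propositionA1:
  fixes m n k :: nat and A :: "nat \<Rightarrow> nat \<Rightarrow> real" and y :: "nat \<Rightarrow> real"
    and H :: "(nat \<Rightarrow> real) \<Rightarrow> (nat \<Rightarrow> real)"
  assumes "0 < m" and "0 < n" and "0 < k" and "k \<le> n"
    and H: "\<And>X. X \<in> vecs n \<Longrightarrow>
              H X \<in> vecs n \<and> supp (H X) \<subseteq> largest n k X \<and>
              (\<forall>x \<in> vecs n. supp x \<subseteq> largest n k X \<longrightarrow> F m n A y (H X) \<le> F m n A y x)"
  shows "(\<forall>Xs \<in> vecs n. (\<forall>X \<in> vecs n. F m n A y (H Xs) \<le> F m n A y (H X)) \<longrightarrow>
            (norm0 (H Xs) \<le> k \<and>
             (\<forall>x \<in> vecs n. norm0 x \<le> k \<longrightarrow> F m n A y (H Xs) \<le> F m n A y x)))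
       \<and> (\<forall>x' \<in> vecs n. (norm0 x' \<le> k \<and>
             (\<forall>x \<in> vecs n. norm0 x \<le> k \<longrightarrow> F m n A y x' \<le> F m n A y x)) \<longrightarrow>
            (\<forall>X \<in> vecs n. F m n A y (H x') \<le> F m n A y (H X)))"
proof -
  have H_sparse: "H X \<in> vecs n \<and> norm0 (H X) \<le> k" if "X \<in> vecs n" for X
    using H[OF that] norm0_le_if_supp_subset_largest[of "H X" n k X] by simp
  have H_improves: "F m n A y (H x) \<le> F m n A y x" if "x \<in> vecs n" "norm0 x \<le> k" for x
    using H[OF that(1)] supp_subset_largest_self[OF that] that(1) by blast
  show ?thesis
  proof (intro conjI ballI impI)
    fix Xs assume Xs: "Xs \<in> vecs n" and Xs_min: "\<forall>X \<in> vecs n. F m n A y (H Xs) \<le> F m n A y (H X)"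
    show "norm0 (H Xs) \<le> k" using H_sparse[OF Xs] by blast
    fix x assume "x \<in> vecs n" "norm0 x \<le> k"
    then have "F m n A y (H x) \<le> F m n A y x" by (rule H_improves)
    then show "F m n A y (H Xs) \<le> F m n A y x"
      using Xs_min \<open>x \<in> vecs n\<close> by (meson order_trans)
  next
    fix x' X
    assume x': "x' \<in> vecs n" and x'_min: "norm0 x' \<le> k \<and>
             (\<forall>x \<in> vecs n. norm0 x \<le> k \<longrightarrow> F m n A y x' \<le> F m n A y x)"
      and X: "X \<in> vecs n"
    have "F m n A y (H x') \<le> F m n A y x'" using H_improves x' x'_min by blast
    also have "\<dots> \<le> F m n A y (H X)" using x'_min H_sparse[OF X] by blast
    finally show "F m n A y (H x') \<le> F m n A y (H X)" .
  qed
qed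

end
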